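(* Let $\Gamma$ be a splice diagram satisfying the edge determinant and semigroup conditions. Then for all nodes $u,v$ of $\Gamma$ and every edge $e$ adjacent to $v$, the admissible co-weight satisfies $w_u\cdot m_{v,e}\geq \ell_{u,v}$, with equality if and only if $e\not\subseteq[u,v]$.
   Context: A splice diagram is a finite tree $\Gamma$ with at least one vertex of valency $\geq3$ and no vertex of valency $2$; vertices of valency $1$ are leaves, the others nodes. For each node $v$ and edge $e$ at $v$ a positive integer weight $d_{v,e}$ is given; $d_{v,u}:=d_{v,e}$ for $e$ the edge at $v$ on the geodesic $[v,u]$; $d_v=\prod_{e\ni v}d_{v,e}$. For distinct vertices $u,v$, $\ell_{u,v}$ is the product of all $d_{w,e}$ with $w$ a node on $[u,v]$ and $e$ an edge at $w$ not in $[u,v]$; $\ell_{v,v}:=d_v$. Edge determinant condition: $d_{u,v}d_{v,u}>\ell_{u,v}$ for each edge between two nodes. Semigroup condition: for each node $v$ and edge $e$ at $v$, $d_v\in\sum_{\lambda\in L(v,e)}\mathbb{N}\,\ell_{v,\lambda}$, $L(v,e)$ being the set of leaves $\lambda$ with $e\subseteq[v,\lambda]$. With $n$ leaves, $\mathbb{R}^n$ has standard basis $(w_\lambda)$ indexed by leaves, and $w_u=\sum_\lambda\ell_{u,\lambda}w_\lambda$ for a node $u$. An admissible co-weight is $m_{v,e}=\sum_{\lambda\in L(v,e)}\alpha_{v,e,\lambda}w_\lambda$ where $\alpha_{v,e,\lambda}\in\mathbb{N}$ are any fixed numbers with $d_v=\sum_{\lambda\in L(v,e)}\alpha_{v,e,\lambda}\ell_{v,\lambda}$.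 When $u=v$, $[u,v]$ is the single vertex $v$. *)

theory Defs
  imports Main
begin

definition is_path :: "'v set set \<Rightarrow> 'v \<Rightarrow> 'v \<Rightarrow> 'v list \<Rightarrow> bool" where
  "is_path E u v xs \<longleftrightarrow> xs \<noteq> [] \<and> hd xs = u \<and> last xs = v \<and> distinct xs \<and>
     (\<forall>i. Suc i < length xs \<longrightarrow> {xs ! i, xs ! Suc i} \<in> E)"

definition is_tree :: "'v set \<Rightarrow> 'v set set \<Rightarrow> bool" where
  "is_tree V E \<longleftrightarrow> finite V \<and>
     (\<forall>e\<in>E. \<exists>a b. a \<noteq> b \<and> a \<in> V \<and> b \<in> V \<and> e = {a, b}) \<and>
     (\<forall>u\<in>V. \<forall>v\<in>V. \<exists>!xs. is_path E u v xs)"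

definition geod :: "'v set set \<Rightarrow> 'v \<Rightarrow> 'v \<Rightarrow> 'v list" where
  "geod E u v = (THE xs. is_path E u v xs)"

definition geod_verts :: "'v set set \<Rightarrow> 'v \<Rightarrow> 'v \<Rightarrow> 'v set" where
  "geod_verts E u v = set (geod E u v)"

definition geod_edges :: "'v set set \<Rightarrow> 'v \<Rightarrow> 'v \<Rightarrow> 'v set set" where
  "geod_edges E u v =
     {{geod E u v ! i, geod E u v ! Suc i} | i. Suc i < length (geod E u v)}"

definition edges_at :: "'v set set \<Rightarrow> 'v \<Rightarrow> 'v set set" where
  "edges_at E v = {e \<in> E. v \<in> e}"

definition valency :: "'v set set \<Rightarrow> 'v \<Rightarrow> nat" where
  "valency E v = card (edges_at E v)"

definition leaves :: "'v set \<Rightarrow> 'v set set \<Rightarrow> 'v set" where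
  "leaves V E = {v \<in> V. valency E v = 1}"

definition nodes :: "'v set \<Rightarrow> 'v set set \<Rightarrow> 'v set" where
  "nodes V E = V - leaves V E"

definition splice_tree :: "'v set \<Rightarrow> 'v set set \<Rightarrow> bool" where
  "splice_tree V E \<longleftrightarrow> is_tree V E \<and> (\<forall>v\<in>V. valency E v \<noteq> 2) \<and>
     (\<exists>v\<in>V. valency E v \<ge> 3)"

definition pos_weights :: "'v set \<Rightarrow> 'v set set \<Rightarrow> ('v \<Rightarrow> 'v set \<Rightarrow> nat) \<Rightarrow> bool" where
  "pos_weights V E d \<longleftrightarrow> (\<forall>v\<in>nodes V E. \<forall>e\<in>edges_at E v. d v e > 0)"

definition dnode :: "'v set set \<Rightarrow> ('v \<Rightarrow> 'v set \<Rightarrow> nat) \<Rightarrow> 'v \<Rightarrow> nat" where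
  "dnode E d v = (\<Prod>e\<in>edges_at E v. d v e)"

definition ell :: "'v set \<Rightarrow> 'v set set \<Rightarrow> ('v \<Rightarrow> 'v set \<Rightarrow> nat) \<Rightarrow> 'v \<Rightarrow> 'v \<Rightarrow> nat" where
  "ell V E d u v =
     (if u = v then dnode E d v
      else (\<Prod>w\<in>nodes V E \<inter> geod_verts E u v.
              \<Prod>e\<in>edges_at E w - geod_edges E u v. d w e))"

definition Lset :: "'v set \<Rightarrow> 'v set set \<Rightarrow> 'v \<Rightarrow> 'v set \<Rightarrow> 'v set" where
  "Lset V E v e = {l \<in> leaves V E. e \<in> geod_edges E v l}"

definition edge_determinant :: "'v set \<Rightarrow> 'v set set \<Rightarrow> ('v \<Rightarrow> 'v set \<Rightarrow> nat) \<Rightarrow> bool" where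
  "edge_determinant V E d \<longleftrightarrow>
     (\<forall>u\<in>nodes V E. \<forall>v\<in>nodes V E. {u, v} \<in> E \<longrightarrow> d u {u, v} * d v {u, v} > ell V E d u v)"

definition semigroup_cond :: "'v set \<Rightarrow> 'v set set \<Rightarrow> ('v \<Rightarrow> 'v set \<Rightarrow> nat) \<Rightarrow> bool" where
  "semigroup_cond V E d \<longleftrightarrow>
     (\<forall>v\<in>nodes V E. \<forall>e\<in>edges_at E v.
        \<exists>\<alpha>::'v \<Rightarrow> nat. dnode E d v = (\<Sum>l\<in>Lset V E v e. \<alpha> l * ell V E d v l))"

text \<open>Vectors in R^n with basis indexed by the leaves, as functions on leaves
(values outside the leaves are irrelevant and set to 0).\<close>
definition dotp :: "'v set \<Rightarrow> 'v set set \<Rightarrow> ('v \<Rightarrow> nat) \<Rightarrow> ('v \<Rightarrow> nat) \<Rightarrow> nat" where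
  "dotp V E x y = (\<Sum>l\<in>leaves V E. x l * y l)"

definition wvec :: "'v set \<Rightarrow> 'v set set \<Rightarrow> ('v \<Rightarrow> 'v set \<Rightarrow> nat) \<Rightarrow> 'v \<Rightarrow> 'v \<Rightarrow> nat" where
  "wvec V E d u = (\<lambda>l. if l \<in> leaves V E then ell V E d u l else 0)"

definition coweight :: "'v set \<Rightarrow> 'v set set \<Rightarrow> ('v \<Rightarrow> nat) \<Rightarrow> 'v \<Rightarrow> 'v set \<Rightarrow> 'v \<Rightarrow> nat" where
  "coweight V E \<alpha> v e = (\<lambda>l. if l \<in> Lset V E v e then \<alpha> l else 0)"

definition admissible :: "'v set \<Rightarrow> 'v set set \<Rightarrow> ('v \<Rightarrow> 'v set \<Rightarrow> nat) \<Rightarrow> 'v \<Rightarrow> 'v set \<Rightarrow> ('v \<Rightarrow> nat) \<Rightarrow> bool" where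
  "admissible V E d v e \<alpha> \<longleftrightarrow> dnode E d v = (\<Sum>l\<in>Lset V E v e. \<alpha> l * ell V E d v l)"

end

(*
  Write D v for dnode and \<ell> for ell. Along geodesics \<ell> is multiplicative: if a node x
  lies on [a,b] then D x * \<ell> a b = \<ell> a x * \<ell> x b. With the edge determinant condition
  this gives \<ell> v w ^ 2 < D v * D w for distinct nodes, by induction on their distance.

  Fix a leaf l in L(v,e). If e is not on [u,v], the geodesics from v to u and to l leave v
  through different edges, so v lies on [u,l] and D v * \<ell> u l = \<ell> u v * \<ell> v l. If e is on
  [u,v], both geodesics leave v through e and branch at a node w \<noteq> v lying on [u,l]; the
  three multiplicativity relations at w together with \<ell> v w ^ 2 < D v * D w give
  \<ell> u v * \<ell> v l < D v * \<ell> u l. Weighting by \<alpha> l and summing over L(v,e), admissibility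
  D v = (\<Sum>l. \<alpha> l * \<ell> v l) turns these into w_u \<cdot> m_{v,e} = \<ell> u v, resp. > \<ell> u v.
*)

theory Submission
  imports Defs
begin

section \<open>Edges of vertex lists\<close>

fun path_edges :: "'v list \<Rightarrow> 'v set set" where
  "path_edges (a # b # xs) = insert {a, b} (path_edges (b # xs))"
| "path_edges _ = {}"

lemma distinct_nth_neq_nth_0: "distinct xs \<Longrightarrow> 0 < k \<Longrightarrow> k < length xs \<Longrightarrow> xs ! k \<noteq> xs ! 0"
  by (metis gr_implies_not0 nth_eq_iff_index_eq order.strict_trans)

lemma path_edges_conv_nth:
  "path_edges xs = {{xs ! i, xs ! Suc i} | i. Suc i < length xs}"
proof (induction xs rule: path_edges.induct)
  case (1 a b xs)
  have "{i. Suc i < length (a # b # xs)} = insert 0 (Suc ` {i. Suc i < length (b # xs)})"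
    by (auto simp: image_iff less_Suc_eq_0_disj)
  then have "{{(a # b # xs) ! i, (a # b # xs) ! Suc i} | i. Suc i < length (a # b # xs)} =
        insert {a, b} {{(b # xs) ! i, (b # xs) ! Suc i} | i. Suc i < length (b # xs)}"
    by (simp add: setcompr_eq_image image_image)
  with 1 show ?case by simp
qed auto

lemma path_edges_Cons:
  "path_edges (x # ys) = (if ys = [] then {} else insert {x, hd ys} (path_edges ys))"
  by (cases ys) auto

lemma path_edges_append:
  "path_edges (xs @ ys) =
     path_edges xs \<union> path_edges ys \<union> (if xs = [] \<or> ys = [] then {} else {{last xs, hd ys}})"
  by (induction xs) (auto simp: path_edges_Cons)

lemma path_edges_rev: "path_edges (rev xs) = path_edges xs"
  by (induction xs) (auto simp: path_edges_append path_edges_Cons last_rev insert_commute)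

lemma path_edges_subset_set: "e \<in> path_edges xs \<Longrightarrow> e \<subseteq> set xs"
  by (induction xs rule: path_edges.induct) auto

lemma first_edge_in_path_edges: "1 < length xs \<Longrightarrow> {xs ! 0, xs ! 1} \<in> path_edges xs"
  by (cases xs rule: path_edges.cases) auto

lemma path_edges_containing_hd:
  assumes "distinct xs" "e \<in> path_edges xs" "xs ! 0 \<in> e"
  shows "1 < length xs" "e = {xs ! 0, xs ! 1}"
  using assms path_edges_subset_set by (cases xs rule: path_edges.cases; fastforce)+

lemma is_path_iff_successively:
  "is_path E a b xs \<longleftrightarrow> xs \<noteq> [] \<and> hd xs = a \<and> last xs = b \<and> distinct xs \<and>
     successively (\<lambda>x y. {x, y} \<in> E) xs"
  unfolding is_path_def successively_conv_nth by blast

lemma geod_edges_eq_path_edges: "geod_edges E a b = path_edges (geod E a b)"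
  unfolding geod_edges_def path_edges_conv_nth ..

lemma successively_take: "successively P xs \<Longrightarrow> successively P (take n xs)"
  by (metis append_take_drop_id successively_append_iff)

lemma successively_drop: "successively P xs \<Longrightarrow> successively P (drop n xs)"
  by (metis append_take_drop_id successively_append_iff)

section \<open>Geodesics in a tree\<close>

locale tree =
  fixes V :: "'v set" and E :: "'v set set"
  assumes is_tree: "is_tree V E"
begin

lemma finite_V: "finite V"
  using is_tree unfolding is_tree_def by blast

lemma edge_is_doubleton: "e \<in> E \<Longrightarrow> \<exists>a b. a \<noteq> b \<and> a \<in> V \<and> b \<in> V \<and> e = {a, b}"
  using is_tree unfolding is_tree_def by blast

lemma doubleton_in_E: "{x, y} \<in> E \<Longrightarrow> x \<noteq> y \<and> x \<in> V \<and> y \<in> V"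
  by (drule edge_is_doubleton) (auto simp: doubleton_eq_iff)

lemma finite_edges_at: "finite (edges_at E w)"
proof -
  have "E \<subseteq> Pow V"
    using edge_is_doubleton by blast
  then show ?thesis
    using finite_V unfolding edges_at_def by (simp add: finite_subset)
qed

lemma is_path_geod: "a \<in> V \<Longrightarrow> b \<in> V \<Longrightarrow> is_path E a b (geod E a b)"
  using is_tree unfolding is_tree_def geod_def by (metis theI')

lemma geod_nth_0: "a \<in> V \<Longrightarrow> b \<in> V \<Longrightarrow> geod E a b ! 0 = a"
  using is_path_geod unfolding is_path_def by (metis hd_conv_nth)

lemma start_mem_geod: "a \<in> V \<Longrightarrow> b \<in> V \<Longrightarrow> a \<in> set (geod E a b)"
  using is_path_geod unfolding is_path_def by (metis hd_in_set)

lemma geod_unique: "a \<in> V \<Longrightarrow> b \<in> V \<Longrightarrow> is_path E a b xs \<Longrightarrow> geod E a b = xs"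
  using is_tree unfolding is_tree_def geod_def by (metis the1_equality)

lemma path_subset_V: "is_path E a b xs \<Longrightarrow> a \<in> V \<Longrightarrow> set xs \<subseteq> V"
proof
  fix z assume p: "is_path E a b xs" and a: "a \<in> V" and z: "z \<in> set xs"
  then obtain i where i: "i < length xs" "z = xs ! i"
    by (metis in_set_conv_nth)
  show "z \<in> V"
  proof (cases i)
    case 0
    then show ?thesis using p a i unfolding is_path_def by (metis hd_conv_nth)
  next
    case (Suc j)
    then have "{xs ! j, xs ! Suc j} \<in> E"
      using p i unfolding is_path_def by blast
    then show ?thesis using doubleton_in_E i Suc by blast
  qed
qed

lemma is_path_rev: "is_path E a b xs \<Longrightarrow> is_path E b a (rev xs)"
proof -
  have "successively (\<lambda>x y. {x, y} \<in> E) xs \<Longrightarrow> successively (\<lambda>x y. {y, x} \<in> E) xs"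
    by (erule successively_mono) (simp add: insert_commute)
  then show "is_path E a b xs \<Longrightarrow> is_path E b a (rev xs)"
    unfolding is_path_iff_successively by (simp add: hd_rev last_rev)
qed

lemma geod_subset_V: "a \<in> V \<Longrightarrow> b \<in> V \<Longrightarrow> set (geod E a b) \<subseteq> V"
  using path_subset_V is_path_geod by blast

lemma geod_rev: "a \<in> V \<Longrightarrow> b \<in> V \<Longrightarrow> geod E b a = rev (geod E a b)"
  by (intro geod_unique is_path_rev is_path_geod)

lemma geod_self: "a \<in> V \<Longrightarrow> geod E a a = [a]"
  by (rule geod_unique) (auto simp: is_path_def)

lemma is_path_take:
  "is_path E a b xs \<Longrightarrow> i < length xs \<Longrightarrow> is_path E a (xs ! i) (take (Suc i) xs)"
  unfolding is_path_iff_successively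
  by (auto simp: hd_take last_conv_nth nth_take successively_take)

lemma is_path_drop:
  "is_path E a b xs \<Longrightarrow> i < length xs \<Longrightarrow> is_path E (xs ! i) b (drop i xs)"
  unfolding is_path_iff_successively
  by (auto simp: hd_drop_conv_nth successively_drop)

lemma geod_take:
  assumes "a \<in> V" "b \<in> V" "i < length (geod E a b)"
  shows "geod E a (geod E a b ! i) = take (Suc i) (geod E a b)"
proof (rule geod_unique)
  show "geod E a b ! i \<in> V"
    using geod_subset_V assms by (meson nth_mem subsetD)
  show "is_path E a (geod E a b ! i) (take (Suc i) (geod E a b))"
    using is_path_take[OF is_path_geod] assms by blast
qed (use assms in simp)

lemma geod_drop:
  assumes "a \<in> V" "b \<in> V" "i < length (geod E a b)"
  shows "geod E (geod E a b ! i) b = drop i (geod E a b)"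
proof (rule geod_unique)
  show "geod E a b ! i \<in> V"
    using geod_subset_V assms by (meson nth_mem subsetD)
  show "is_path E (geod E a b ! i) b (drop i (geod E a b))"
    using is_path_drop[OF is_path_geod] assms by blast
qed (use assms in simp)

lemma geod_split:
  assumes "a \<in> V" "b \<in> V" "x \<in> set (geod E a b)"
  shows "geod E a b = geod E a x @ tl (geod E x b)"
    and "set (geod E a x) \<inter> set (geod E x b) = {x}"
proof -
  let ?P = "geod E a b"
  obtain i where i: "i < length ?P" "x = ?P ! i"
    using assms(3) by (metis in_set_conv_nth)
  have ax: "geod E a x = take (Suc i) ?P" and xb: "geod E x b = drop i ?P"
    using geod_take geod_drop assms i by auto
  have dist: "distinct ?P"
    using is_path_geod assms unfolding is_path_def by blast
  have "tl (drop i ?P) = drop (Suc i) ?P"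
    by (simp add: drop_Suc tl_drop)
  then show "?P = geod E a x @ tl (geod E x b)"
    unfolding ax xb by simp
  have "set (take (Suc i) ?P) \<inter> set (drop (Suc i) ?P) = {}"
    using dist by (metis append_take_drop_id distinct_append)
  moreover have "set (drop i ?P) = insert x (set (drop (Suc i) ?P))"
    using i by (metis Cons_nth_drop_Suc list.simps(15))
  moreover have "x \<in> set (take (Suc i) ?P)"
    using i by (simp add: take_Suc_conv_app_nth)
  ultimately show "set (geod E a x) \<inter> set (geod E x b) = {x}"
    unfolding ax xb by auto
qed

lemma geod_second_vertex:
  assumes "a \<in> V" "b \<in> V" "x \<in> set (geod E a b)" "x \<noteq> a"
  shows "1 < length (geod E a b)" "geod E a b ! 1 = geod E a x ! 1"
proof -
  have "x \<in> V"
    using geod_subset_V assms by blast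
  then have "is_path E a x (geod E a x)"
    using assms is_path_geod by blast
  then have "1 < length (geod E a x)"
    using assms(4) unfolding is_path_def by (cases "geod E a x") auto
  then show "1 < length (geod E a b)" "geod E a b ! 1 = geod E a x ! 1"
    using geod_split(1)[OF assms(1-3)] by (simp_all add: nth_append)
qed

lemma is_path_append:
  assumes "is_path E a x xs" "is_path E x b ys" "set xs \<inter> set ys = {x}"
  shows "is_path E a b (xs @ tl ys)"
proof -
  obtain ys' where ys: "ys = x # ys'"
    using assms(2) unfolding is_path_def by (cases ys) auto
  have "x \<notin> set ys'"
    using assms(2) ys unfolding is_path_def by simp
  then have "set xs \<inter> set ys' = {}"
    using assms(3) ys by auto
  moreover have "last xs = x"
    using assms(1) unfolding is_path_def by simp
  ultimately show ?thesis
    using assms(1,2) unfolding is_path_iff_successively ys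
    by (auto simp: successively_append_iff successively_Cons last_append)
qed

lemma mem_geod_if_geods_meet_only_at:
  assumes "a \<in> V" "b \<in> V" "c \<in> V"
    and "set (geod E a b) \<inter> set (geod E a c) = {a}"
  shows "a \<in> set (geod E b c)"
proof -
  have "is_path E b a (rev (geod E a b))"
    using is_path_rev is_path_geod assms by blast
  then have "is_path E b c (rev (geod E a b) @ tl (geod E a c))"
    using is_path_append is_path_geod assms by simp
  then have "geod E b c = rev (geod E a b) @ tl (geod E a c)"
    using geod_unique assms by blast
  then show ?thesis
    using assms(4) by auto
qed

text \<open>The longest common prefix of [a,b] and [a,c] ends at the branch point of a, b, c.\<close>

lemma geod_common_prefix_extends:
  assumes abc: "a \<in> V" "b \<in> V" "c \<in> V"
    and "m < length (geod E a b)" "m < length (geod E a c)"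
    and "take (Suc m) (geod E a b) = take (Suc m) (geod E a c)"
  shows "\<exists>k\<ge>m. k < length (geod E a b) \<and> k < length (geod E a c) \<and>
     take (Suc k) (geod E a b) = take (Suc k) (geod E a c) \<and> geod E a b ! k \<in> set (geod E b c)"
proof -
  define P where "P = geod E a b"
  define Q where "Q = geod E a c"
  define S where "S = {k. k < length P \<and> k < length Q \<and> take (Suc k) P = take (Suc k) Q}"
  have "finite S"
    unfolding S_def by (rule finite_subset[of _ "{..<length P}"]) auto
  moreover have "m \<in> S"
    unfolding S_def P_def Q_def using assms by blast
  ultimately obtain k where "k \<in> S" "m \<le> k" and k_max: "\<And>j. j \<in> S \<Longrightarrow> j \<le> k"
    using Max_in Max_ge by blast
  then have k: "k < length P" "k < length Q" "take (Suc k) P = take (Suc k) Q"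
    unfolding S_def by auto
  define w where "w = P ! k"
  have wQ: "Q ! k = w"
    unfolding w_def using k(3) by (metis lessI nth_take)
  have wV: "w \<in> V"
    unfolding w_def P_def using geod_subset_V abc k(1) P_def by (meson nth_mem subsetD)
  have wb: "geod E w b = drop k P" and wc: "geod E w c = drop k Q"
    using geod_drop abc k wQ unfolding w_def P_def Q_def by metis+
  have "z = w" if z: "z \<in> set (geod E w b)" "z \<in> set (geod E w c)" for z
  proof (rule ccontr)
    assume "z \<noteq> w"
    then have "1 < length (drop k P)" "1 < length (drop k Q)" "drop k P ! 1 = drop k Q ! 1"
      using geod_second_vertex[OF wV _ z(1)] geod_second_vertex[OF wV _ z(2)] abc
      unfolding wb wc by metis+
    then have "Suc k \<in> S"
      using k unfolding S_def by (auto simp: take_Suc_conv_app_nth)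
    then show False
      using k_max by fastforce
  qed
  moreover have "w \<in> set (geod E w b)" "w \<in> set (geod E w c)"
    using start_mem_geod wV abc by blast+
  ultimately have "w \<in> set (geod E b c)"
    using mem_geod_if_geods_meet_only_at wV abc by blast
  then show ?thesis
    using \<open>m \<le> k\<close> k unfolding w_def P_def Q_def by blast
qed

lemma interior_node:
  assumes "is_path E a b xs" "0 < i" "Suc i < length xs"
  shows "xs ! i \<in> nodes V E"
proof -
  let ?x = "xs ! i"
  have dist: "distinct xs"
    using assms(1) unfolding is_path_def by simp
  have e1: "{xs ! (i - 1), ?x} \<in> E"
    using assms unfolding is_path_def by (metis Suc_diff_1 Suc_lessD)
  have e2: "{?x, xs ! Suc i} \<in> E"
    using assms unfolding is_path_def by blast
  have "xs ! (i - 1) \<noteq> xs ! Suc i" "xs ! (i - 1) \<noteq> ?x"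
    using dist assms by (simp_all add: nth_eq_iff_index_eq)
  then have "card {{xs ! (i - 1), ?x}, {?x, xs ! Suc i}} = 2"
    by (auto simp: doubleton_eq_iff)
  moreover have "{{xs ! (i - 1), ?x}, {?x, xs ! Suc i}} \<subseteq> edges_at E ?x"
    using e1 e2 unfolding edges_at_def by auto
  ultimately have "2 \<le> valency E ?x"
    unfolding valency_def by (metis card_mono finite_edges_at)
  moreover have "?x \<in> V"
    using e2 doubleton_in_E by blast
  ultimately show ?thesis
    unfolding nodes_def leaves_def by simp
qed

lemma geod_edge_at_start:
  assumes "a \<in> V" "b \<in> V" "e \<in> path_edges (geod E a b)" "a \<in> e"
  shows "1 < length (geod E a b)" "e = {a, geod E a b ! 1}"
proof -
  have "distinct (geod E a b)" "geod E a b ! 0 = a"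
    using is_path_geod[OF assms(1,2)] unfolding is_path_def by (auto simp: hd_conv_nth)
  then show "1 < length (geod E a b)" "e = {a, geod E a b ! 1}"
    using path_edges_containing_hd[of "geod E a b" e] assms(3,4) by auto
qed

lemma mem_geod_if_first_edge_off_geod:
  assumes "u \<in> V" "v \<in> V" "l \<in> V" "v \<in> e"
    and "e \<in> path_edges (geod E v l)" "e \<notin> path_edges (geod E v u)"
  shows "v \<in> set (geod E u l)"
proof (rule mem_geod_if_geods_meet_only_at[OF assms(2,1,3)])
  have "z = v" if z: "z \<in> set (geod E v u)" "z \<in> set (geod E v l)" for z
  proof (rule ccontr)
    assume "z \<noteq> v"
    then have "1 < length (geod E v u)" "geod E v u ! 1 = geod E v l ! 1"
      using geod_second_vertex[OF assms(2) _ z(1)] geod_second_vertex[OF assms(2) _ z(2)] assms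
      by metis+
    then have "e \<in> path_edges (geod E v u)"
      using first_edge_in_path_edges geod_edge_at_start[OF assms(2,3,5,4)] geod_nth_0 assms(1,2)
      by metis
    with assms(6) show False
      by contradiction
  qed
  moreover have "v \<in> set (geod E v u)" "v \<in> set (geod E v l)"
    using start_mem_geod assms(1-3) by blast+
  ultimately show "set (geod E v u) \<inter> set (geod E v l) = {v}"
    by blast
qed

lemma geod_nth_node:
  assumes "a \<in> V" "u \<in> nodes V E" "0 < k" "k < length (geod E a u)"
  shows "geod E a u ! k \<in> nodes V E"
proof (cases "Suc k < length (geod E a u)")
  case True
  have "u \<in> V"
    using assms(2) unfolding nodes_def by blast
  then show ?thesis
    using interior_node[OF is_path_geod] assms True by blast
next
  case False
  then have "k = length (geod E a u) - 1" "geod E a u \<noteq> []"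
    using assms(4) by auto
  moreover have "last (geod E a u) = u"
    using is_path_geod assms(1,2) unfolding nodes_def is_path_def by blast
  ultimately show ?thesis
    using assms(2) last_conv_nth[of "geod E a u"] by auto
qed

lemma geod_same_start_edge:
  assumes "a \<in> V" "b \<in> V" "c \<in> V" "a \<in> e"
    and "e \<in> path_edges (geod E a b)" "e \<in> path_edges (geod E a c)"
  shows "1 < length (geod E a b)" "1 < length (geod E a c)"
    and "take 2 (geod E a b) = take 2 (geod E a c)"
proof -
  let ?P = "geod E a b" and ?Q = "geod E a c"
  show P: "1 < length ?P" and Q: "1 < length ?Q"
    using geod_edge_at_start assms by blast+
  have "?P ! 1 \<noteq> a" "?Q ! 1 \<noteq> a"
    using P Q distinct_nth_neq_nth_0 geod_nth_0 is_path_geod assms(1-3) unfolding is_path_def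
    by (metis zero_less_one)+
  moreover have "e = {a, ?P ! 1}" "e = {a, ?Q ! 1}"
    using geod_edge_at_start assms by blast+
  ultimately have "?P ! 1 = ?Q ! 1"
    by (auto simp: doubleton_eq_iff)
  moreover have "?P ! 0 = ?Q ! 0"
    using geod_nth_0 assms(1-3) by simp
  ultimately show "take 2 ?P = take 2 ?Q"
    using P Q by (metis One_nat_def Suc_1 Suc_lessD take_Suc_conv_app_nth take_0)
qed

lemma geod_branch_node:
  assumes "u \<in> nodes V E" "v \<in> V" "l \<in> V" "v \<in> e"
    and "e \<in> path_edges (geod E v u)" "e \<in> path_edges (geod E v l)"
  obtains w where "w \<in> nodes V E" "w \<noteq> v" "w \<in> set (geod E v u)" "w \<in> set (geod E v l)"
    "w \<in> set (geod E u l)"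
proof -
  let ?P = "geod E v u" and ?Q = "geod E v l"
  have uV: "u \<in> V"
    using assms(1) unfolding nodes_def by blast
  obtain k where k: "1 \<le> k" "k < length ?P" "k < length ?Q"
    "take (Suc k) ?P = take (Suc k) ?Q" "?P ! k \<in> set (geod E u l)"
    using geod_common_prefix_extends[OF assms(2) uV assms(3), of 1]
      geod_same_start_edge[OF assms(2) uV assms(3-6)] by (auto simp: numeral_2_eq_2)
  show ?thesis
  proof
    show "?P ! k \<in> nodes V E"
      using geod_nth_node[OF assms(2,1)] k(1,2) by simp
    show "?P ! k \<noteq> v"
      using distinct_nth_neq_nth_0[of ?P k] geod_nth_0[OF assms(2) uV] is_path_geod[OF assms(2) uV] k(1,2)
      unfolding is_path_def by auto
    show "?P ! k \<in> set ?P"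
      using k(2) by simp
    have "?P ! k = ?Q ! k"
      using k(4) by (metis lessI nth_take)
    then show "?P ! k \<in> set ?Q"
      using k(3) by simp
    show "?P ! k \<in> set (geod E u l)"
      using k(5) .
  qed
qed

lemma mem_LsetD: "l \<in> Lset V E v e \<Longrightarrow> l \<in> V \<and> e \<in> path_edges (geod E v l)"
  unfolding Lset_def leaves_def geod_edges_eq_path_edges by blast

lemma finite_Lset: "finite (Lset V E v e)"
proof -
  have "Lset V E v e \<subseteq> V"
    using mem_LsetD by blast
  then show ?thesis
    using finite_V by (rule finite_subset)
qed

end

section \<open>Multiplicativity of \<open>ell\<close> along geodesics\<close>

lemma prod_mult_prod_diff_Un:
  fixes f :: "'a \<Rightarrow> 'b::comm_monoid_mult"
  assumes "finite A" "A \<inter> B \<inter> C = {}"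
  shows "prod f A * prod f (A - (B \<union> C)) = prod f (A - B) * prod f (A - C)"
proof -
  have "A - (A \<inter> B) = A - B" "(A - C) - (A \<inter> B) = A - (B \<union> C)" "A \<inter> B \<subseteq> A - C"
    using assms(2) by auto
  then have "prod f A = prod f (A - B) * prod f (A \<inter> B)"
    and "prod f (A - C) = prod f (A - (B \<union> C)) * prod f (A \<inter> B)"
    using prod.subset_diff[of "A \<inter> B" A f] prod.subset_diff[of "A \<inter> B" "A - C" f] assms(1)
    by auto
  then show ?thesis
    by (simp add: ac_simps)
qed

locale weighted_tree = tree +
  fixes d :: "'v \<Rightarrow> 'v set \<Rightarrow> nat"
  assumes pos_weights: "pos_weights V E d"
begin

definition off_path_weight :: "'v list \<Rightarrow> 'v \<Rightarrow> nat" where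
  "off_path_weight xs w = (\<Prod>e\<in>edges_at E w - path_edges xs. d w e)"

definition path_weight :: "'v list \<Rightarrow> nat" where
  "path_weight xs = (\<Prod>w\<in>nodes V E \<inter> set xs. off_path_weight xs w)"

lemma ell_eq_path_weight: "a \<noteq> b \<Longrightarrow> ell V E d a b = path_weight (geod E a b)"
  unfolding ell_def path_weight_def off_path_weight_def geod_verts_def geod_edges_eq_path_edges
  by simp

lemma dnode_pos: "v \<in> nodes V E \<Longrightarrow> 0 < dnode E d v"
  using pos_weights unfolding dnode_def pos_weights_def by (intro prod_pos) blast

lemma off_path_weight_pos: "w \<in> nodes V E \<Longrightarrow> 0 < off_path_weight xs w"
  using pos_weights unfolding off_path_weight_def pos_weights_def by (intro prod_pos) blast

lemma ell_pos: "a \<noteq> b \<or> a \<in> nodes V E \<Longrightarrow> 0 < ell V E d a b"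
proof (cases "a = b")
  case False
  then show ?thesis
    unfolding ell_eq_path_weight[OF False] path_weight_def
    using off_path_weight_pos by (intro prod_pos) blast
qed (auto simp: ell_def dnode_pos)

lemma path_weight_rev: "path_weight (rev xs) = path_weight xs"
  unfolding path_weight_def off_path_weight_def by (simp add: path_edges_rev)

lemma ell_sym:
  assumes "a \<in> V" "b \<in> V"
  shows "ell V E d a b = ell V E d b a"
proof (cases "a = b")
  case False
  then show ?thesis
    using geod_rev[OF assms] by (simp add: ell_eq_path_weight path_weight_rev)
qed simp

lemma off_path_weight_cong:
  assumes "path_edges xs = path_edges ys \<union> path_edges zs" "w \<notin> set zs"
  shows "off_path_weight xs w = off_path_weight ys w"
proof -
  have "edges_at E w \<inter> path_edges zs = {}"
    using assms(2) path_edges_subset_set unfolding edges_at_def by blast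
  then have "edges_at E w - path_edges xs = edges_at E w - path_edges ys"
    using assms(1) by blast
  then show ?thesis
    unfolding off_path_weight_def by simp
qed

lemma dnode_mult_off_path_weight_Un:
  assumes "path_edges xs = path_edges ys \<union> path_edges zs" "set ys \<inter> set zs = {x}"
  shows "dnode E d x * off_path_weight xs x = off_path_weight ys x * off_path_weight zs x"
proof -
  have "edges_at E x \<inter> path_edges ys \<inter> path_edges zs = {}"
  proof (intro equals0I)
    fix e assume "e \<in> edges_at E x \<inter> path_edges ys \<inter> path_edges zs"
    then have "e \<in> E" "e \<subseteq> {x}"
      using path_edges_subset_set assms(2) unfolding edges_at_def by blast+
    then show False
      using edge_is_doubleton by force
  qed
  then show ?thesis
    unfolding off_path_weight_def dnode_def assms(1)
    using prod_mult_prod_diff_Un[OF finite_edges_at] by blast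
qed

lemma path_weight_append:
  assumes xs: "xs \<noteq> []" "last xs = x" and ys: "ys = x # ys'"
    and meet: "set xs \<inter> set ys = {x}" and x: "x \<in> nodes V E"
  shows "dnode E d x * path_weight (xs @ ys') = path_weight xs * path_weight ys"
proof -
  let ?P = "xs @ ys'" and ?opw = off_path_weight
  have edges: "path_edges ?P = path_edges xs \<union> path_edges ys"
    using xs ys by (auto simp: path_edges_append path_edges_Cons)
  define SX where "SX = nodes V E \<inter> set xs - {x}"
  define SY where "SY = nodes V E \<inter> set ys - {x}"
  have "x \<in> set xs"
    using xs by auto
  then have nodes_P: "nodes V E \<inter> set ?P = insert x (SX \<union> SY)"
    and nodes_xs: "nodes V E \<inter> set xs = insert x SX"
    and nodes_ys: "nodes V E \<inter> set ys = insert x SY"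
    using x ys unfolding SX_def SY_def by auto
  have disj: "SX \<inter> SY = {}"
    using meet unfolding SX_def SY_def by auto
  have fin: "finite SX" "finite SY" "x \<notin> SX" "x \<notin> SY"
    unfolding SX_def SY_def by auto
  have "?opw ?P w = ?opw xs w" if "w \<in> SX" for w
    using off_path_weight_cong[OF edges] that meet unfolding SX_def by blast
  moreover have "?opw ?P w = ?opw ys w" if "w \<in> SY" for w
    using off_path_weight_cong[OF edges[unfolded Un_commute[of "path_edges xs"]]] that meet
    unfolding SY_def by blast
  ultimately have "path_weight ?P = ?opw ?P x * (prod (?opw xs) SX * prod (?opw ys) SY)"
    unfolding path_weight_def nodes_P using disj fin
    by (simp add: prod.union_disjoint)
  moreover have "path_weight xs = ?opw xs x * prod (?opw xs) SX"
    unfolding path_weight_def nodes_xs using fin by simp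
  moreover have "path_weight ys = ?opw ys x * prod (?opw ys) SY"
    unfolding path_weight_def nodes_ys using fin by simp
  moreover have "dnode E d x * ?opw ?P x = ?opw xs x * ?opw ys x"
    using dnode_mult_off_path_weight_Un[OF edges meet] .
  ultimately show ?thesis
    by (simp add: ac_simps)
qed

lemma ell_mult:
  assumes "a \<in> V" "b \<in> V" "x \<in> nodes V E" "x \<in> set (geod E a b)"
  shows "dnode E d x * ell V E d a b = ell V E d a x * ell V E d x b"
proof (cases "a = x \<or> x = b")
  case True
  then show ?thesis
    unfolding ell_def by auto
next
  case False
  have "a \<noteq> b"
    using False assms geod_self by force
  have xV: "x \<in> V"
    using assms(3) unfolding nodes_def by blast
  obtain ys' where ys': "geod E x b = x # ys'"
    using is_path_geod[OF xV assms(2)] unfolding is_path_def by (cases "geod E x b") auto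
  have "geod E a x \<noteq> []" "last (geod E a x) = x"
    using is_path_geod[OF assms(1) xV] unfolding is_path_def by auto
  with geod_split[OF assms(1,2,4)] ys' show ?thesis
    using False \<open>a \<noteq> b\<close> assms(3) path_weight_append[of "geod E a x" x "geod E x b" ys']
    by (simp add: ell_eq_path_weight)
qed

lemma ell_edge:
  assumes "v \<in> nodes V E" "w \<in> nodes V E" "{v, w} \<in> E"
  shows "ell V E d v w * (d v {v, w} * d w {v, w}) = dnode E d v * dnode E d w"
proof -
  have vw: "v \<noteq> w" "v \<in> V" "w \<in> V"
    using doubleton_in_E[OF assms(3)] by auto
  have "is_path E v w [v, w]"
    unfolding is_path_iff_successively using vw assms(3) by simp
  then have "ell V E d v w = off_path_weight [v, w] v * off_path_weight [v, w] w"
    using geod_unique vw assms(1,2) by (simp add: ell_eq_path_weight path_weight_def)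
  moreover have "dnode E d y = d y {v, w} * off_path_weight [v, w] y" if "y \<in> {v, w}" for y
    using prod.remove[OF finite_edges_at, of "{v, w}" y "d y"] that assms(3)
    unfolding dnode_def off_path_weight_def edges_at_def by simp
  ultimately show ?thesis
    by simp
qed

lemma ell_sq_less_dnode_mult_if_edge:
  assumes "edge_determinant V E d" "v \<in> nodes V E" "w \<in> nodes V E" "{v, w} \<in> E"
  shows "(ell V E d v w)\<^sup>2 < dnode E d v * dnode E d w"
proof -
  have "ell V E d v w < d v {v, w} * d w {v, w}"
    using assms unfolding edge_determinant_def by blast
  moreover have "0 < ell V E d v w"
    using ell_pos doubleton_in_E[OF assms(4)] by blast
  ultimately have "(ell V E d v w)\<^sup>2 < ell V E d v w * (d v {v, w} * d w {v, w})"
    by (simp add: power2_eq_square)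
  then show ?thesis
    using ell_edge[OF assms(2-4)] by simp
qed

lemma ell_sq_less_dnode_mult_through_node:
  assumes "v \<in> V" "w \<in> V" "x \<in> nodes V E" "x \<in> set (geod E v w)"
    and "(ell V E d v x)\<^sup>2 < dnode E d v * dnode E d x"
    and "(ell V E d x w)\<^sup>2 < dnode E d x * dnode E d w"
  shows "(ell V E d v w)\<^sup>2 < dnode E d v * dnode E d w"
proof -
  let ?L = "ell V E d" and ?D = "dnode E d"
  have "(?D x)\<^sup>2 * (?L v w)\<^sup>2 = (?L v x)\<^sup>2 * (?L x w)\<^sup>2"
    using ell_mult[OF assms(1-4)] by (metis power_mult_distrib)
  also have "\<dots> < (?D v * ?D x) * (?D x * ?D w)"
  proof (rule mult_strict_mono[OF assms(5,6)])
    show "0 < ?D v * ?D x"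
      using assms(5) by (cases "?D v * ?D x") auto
  qed simp
  also have "\<dots> = (?D x)\<^sup>2 * (?D v * ?D w)"
    by (simp add: power2_eq_square ac_simps)
  finally show ?thesis
    by simp
qed

lemma ell_sq_less_dnode_mult:
  assumes edet: "edge_determinant V E d"
  shows "v \<in> nodes V E \<Longrightarrow> w \<in> nodes V E \<Longrightarrow> v \<noteq> w \<Longrightarrow>
    (ell V E d v w)\<^sup>2 < dnode E d v * dnode E d w"
proof (induction "length (geod E v w)" arbitrary: v w rule: less_induct)
  case less
  let ?P = "geod E v w"
  have vV: "v \<in> V" "w \<in> V"
    using less.prems unfolding nodes_def by auto
  have pP: "is_path E v w ?P"
    using is_path_geod vV by blast
  have "1 < length ?P"
    using pP less.prems(3) unfolding is_path_def by (cases ?P rule: path_edges.cases) auto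
  then have edge: "{v, ?P ! 1} \<in> E" and "?P ! 1 \<noteq> v"
    using pP geod_nth_0[OF vV] distinct_nth_neq_nth_0[of ?P 1] unfolding is_path_def by auto
  show ?case
  proof (cases "?P ! 1 = w")
    case True
    then show ?thesis
      using ell_sq_less_dnode_mult_if_edge[OF edet less.prems(1,2)] edge by simp
  next
    case False
    define x where "x = ?P ! 1"
    have "Suc 1 < length ?P"
      using False \<open>1 < length ?P\<close> pP last_conv_nth[of ?P] unfolding is_path_def x_def
      by (metis One_nat_def Suc_lessI diff_Suc_1)
    then have xN: "x \<in> nodes V E"
      using interior_node[OF pP] unfolding x_def by simp
    have "length (geod E v x) < length ?P" "length (geod E x w) < length ?P"
      using geod_take[OF vV, of 1] geod_drop[OF vV, of 1] \<open>Suc 1 < length ?P\<close>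
      unfolding x_def by auto
    then show ?thesis
      using less.hyps less.prems xN \<open>?P ! 1 \<noteq> v\<close> False \<open>1 < length ?P\<close>
      by (intro ell_sq_less_dnode_mult_through_node[OF vV xN]) (auto simp: x_def)
  qed
qed

section \<open>Comparison over the leaves of \<open>L(v,e)\<close>\<close>

lemma dnode_mult_ell_eq_if_edge_off_geod:
  assumes "u \<in> nodes V E" "v \<in> nodes V E" "l \<in> V" "v \<in> e"
    and "e \<in> path_edges (geod E v l)" "e \<notin> path_edges (geod E u v)"
  shows "dnode E d v * ell V E d u l = ell V E d u v * ell V E d v l"
proof -
  have uV: "u \<in> V" and vV: "v \<in> V"
    using assms(1,2) unfolding nodes_def by auto
  have "e \<notin> path_edges (geod E v u)"
    using assms(6) geod_rev[OF uV vV] by (simp add: path_edges_rev)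
  then have "v \<in> set (geod E u l)"
    using mem_geod_if_first_edge_off_geod uV vV assms(3-5) by blast
  then show ?thesis
    using ell_mult uV assms(2,3) by blast
qed

lemma ell_mult_ell_less_if_edge_on_geod:
  assumes edet: "edge_determinant V E d"
    and "u \<in> nodes V E" "v \<in> nodes V E" "l \<in> V" "v \<in> e"
    and "e \<in> path_edges (geod E v l)" "e \<in> path_edges (geod E u v)"
  shows "ell V E d u v * ell V E d v l < dnode E d v * ell V E d u l"
proof -
  let ?L = "ell V E d" and ?D = "dnode E d"
  have uV: "u \<in> V" and vV: "v \<in> V"
    using assms(2,3) unfolding nodes_def by auto
  have "e \<in> path_edges (geod E v u)"
    using assms(7) geod_rev[OF uV vV] by (simp add: path_edges_rev)
  then obtain w where w: "w \<in> nodes V E" "w \<noteq> v" "w \<in> set (geod E v u)"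
    "w \<in> set (geod E v l)" "w \<in> set (geod E u l)"
    using geod_branch_node assms(2,4,5,6) vV by blast
  have wV: "w \<in> V"
    using w(1) unfolding nodes_def by blast
  have "w \<in> set (geod E u v)"
    using w(3) geod_rev[OF uV vV] by simp
  then have m_uv: "?D w * ?L u v = ?L u w * ?L v w"
    using ell_mult[OF uV vV w(1)] ell_sym[OF wV vV] by simp
  have m_vl: "?D w * ?L v l = ?L v w * ?L w l"
    using ell_mult[OF vV assms(4) w(1,4)] .
  have m_ul: "?D w * ?L u l = ?L u w * ?L w l"
    using ell_mult[OF uV assms(4) w(1,5)] .
  have "0 < ?D w * ?L u l"
    using dnode_pos[OF w(1)] ell_pos[of u l] assms(2) by simp
  have "(?D w * ?D w) * (?L u v * ?L v l) = (?D w * ?L u v) * (?D w * ?L v l)"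
    by (simp add: ac_simps)
  also have "\<dots> = (?L u w * ?L w l) * (?L v w)\<^sup>2"
    unfolding m_uv m_vl by (simp add: power2_eq_square ac_simps)
  also have "\<dots> = (?D w * ?L u l) * (?L v w)\<^sup>2"
    unfolding m_ul ..
  also have "\<dots> < (?D w * ?L u l) * (?D v * ?D w)"
    using ell_sq_less_dnode_mult[OF edet assms(3) w(1)] w(2) \<open>0 < ?D w * ?L u l\<close> by simp
  also have "\<dots> = (?D w * ?D w) * (?D v * ?L u l)"
    by (simp add: ac_simps)
  finally show ?thesis
    by simp
qed

lemma sum_coweight_ell_eq_if_edge_off_geod:
  assumes "u \<in> nodes V E" "v \<in> nodes V E" "e \<in> edges_at E v" "admissible V E d v e \<alpha>"
    and "e \<notin> geod_edges E u v"
  shows "(\<Sum>l\<in>Lset V E v e. \<alpha> l * ell V E d u l) = ell V E d u v"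
proof -
  let ?L = "ell V E d" and ?D = "dnode E d"
  have "?D v * (\<Sum>l\<in>Lset V E v e. \<alpha> l * ?L u l) = (\<Sum>l\<in>Lset V E v e. \<alpha> l * (?D v * ?L u l))"
    by (simp add: sum_distrib_left ac_simps)
  also have "\<dots> = (\<Sum>l\<in>Lset V E v e. \<alpha> l * (?L u v * ?L v l))"
    using dnode_mult_ell_eq_if_edge_off_geod[OF assms(1,2)] mem_LsetD assms(3,5)
    unfolding edges_at_def geod_edges_eq_path_edges by (intro sum.cong) auto
  also have "\<dots> = ?L u v * ?D v"
    using assms(4) unfolding admissible_def by (simp add: sum_distrib_left ac_simps)
  finally show ?thesis
    using dnode_pos[OF assms(2)] by simp
qed

lemma ell_less_sum_coweight_ell_if_edge_on_geod:
  assumes "edge_determinant V E d"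
    and "u \<in> nodes V E" "v \<in> nodes V E" "e \<in> edges_at E v" "admissible V E d v e \<alpha>"
    and "e \<in> geod_edges E u v"
  shows "ell V E d u v < (\<Sum>l\<in>Lset V E v e. \<alpha> l * ell V E d u l)"
proof -
  let ?L = "ell V E d" and ?D = "dnode E d"
  have less: "?L u v * ?L v l < ?D v * ?L u l" if "l \<in> Lset V E v e" for l
    using ell_mult_ell_less_if_edge_on_geod[OF assms(1-3)] mem_LsetD[OF that] assms(4,6)
    unfolding edges_at_def geod_edges_eq_path_edges by blast
  have adm: "?D v = (\<Sum>l\<in>Lset V E v e. \<alpha> l * ?L v l)"
    using assms(5) unfolding admissible_def .
  have "\<exists>l\<in>Lset V E v e. \<alpha> l * ?L v l \<noteq> 0"
  proof (rule ccontr)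
    assume none: "\<not> ?thesis"
    have "?D v = 0"
      unfolding adm using none by (intro sum.neutral) blast
    then show False
      using dnode_pos[OF assms(3)] by simp
  qed
  then obtain l0 where "l0 \<in> Lset V E v e" "0 < \<alpha> l0"
    by auto
  have "?L u v * ?D v = (\<Sum>l\<in>Lset V E v e. \<alpha> l * (?L u v * ?L v l))"
    unfolding adm by (simp add: sum_distrib_left ac_simps)
  also have "\<dots> < (\<Sum>l\<in>Lset V E v e. \<alpha> l * (?D v * ?L u l))"
  proof (rule sum_strict_mono_ex1[OF finite_Lset])
    show "\<forall>l\<in>Lset V E v e. \<alpha> l * (?L u v * ?L v l) \<le> \<alpha> l * (?D v * ?L u l)"
      using less by (simp add: less_imp_le)
    show "\<exists>l\<in>Lset V E v e. \<alpha> l * (?L u v * ?L v l) < \<alpha> l * (?D v * ?L u l)"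
      using less \<open>l0 \<in> Lset V E v e\<close> \<open>0 < \<alpha> l0\<close> by auto
  qed
  also have "\<dots> = ?D v * (\<Sum>l\<in>Lset V E v e. \<alpha> l * ?L u l)"
    by (simp add: sum_distrib_left ac_simps)
  finally show ?thesis
    by (simp add: mult.commute)
qed

end

lemma dotp_wvec_coweight:
  assumes "finite V"
  shows "dotp V E (wvec V E d u) (coweight V E \<alpha> v e) = (\<Sum>l\<in>Lset V E v e. \<alpha> l * ell V E d u l)"
  unfolding dotp_def wvec_def coweight_def
  using assms by (intro sum.mono_neutral_cong_right) (auto simp: Lset_def leaves_def)

theorem lemma2p17:
  fixes V :: "'v set" and E :: "'v set set" and d :: "'v \<Rightarrow> 'v set \<Rightarrow> nat"
    and \<alpha> :: "'v \<Rightarrow> nat" and u v :: 'v and e :: "'v set"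
  assumes "splice_tree V E"
    and "pos_weights V E d"
    and "edge_determinant V E d"
    and "semigroup_cond V E d"
    and "u \<in> nodes V E" and "v \<in> nodes V E"
    and "e \<in> edges_at E v"
    and "admissible V E d v e \<alpha>"
  shows "dotp V E (wvec V E d u) (coweight V E \<alpha> v e) \<ge> ell V E d u v \<and>
         (dotp V E (wvec V E d u) (coweight V E \<alpha> v e) = ell V E d u v
            \<longleftrightarrow> e \<notin> geod_edges E u v)"
proof -
  \<comment> \<open>The semigroup condition only guarantees that admissible co-weights exist.\<close>
  interpret weighted_tree V E d
    using assms(1,2) unfolding splice_tree_def by unfold_locales auto
  have "dotp V E (wvec V E d u) (coweight V E \<alpha> v e) = (\<Sum>l\<in>Lset V E v e. \<alpha> l * ell V E d u l)"
    using dotp_wvec_coweight finite_V .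
  then show ?thesis
    using sum_coweight_ell_eq_if_edge_off_geod[OF assms(5-8)]
      ell_less_sum_coweight_ell_if_edge_on_geod[OF assms(3,5-8)]
    by (cases "e \<in> geod_edges E u v") auto
qed

end
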